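(* If the duality gap is zero and $\lambda^{\star}$ is an optimal solution of the dual problem, then an optimal solution $x^\star$ of the primal problem can be computed by solving the following linear system with respect to $x^\star$: $\begin{bmatrix}H(\lambda^{\star}) \\ b^{\top} A\end{bmatrix} x^\star = \begin{bmatrix}A^{\top} b \\ \lambda_y^\star - b^{\top} b\end{bmatrix}$.
   Context: 3D pose graph optimization with $n$ poses $(t_i,R_i)$, first pose anchored to the identity. Let $r_i\in\mathbb{R}^9$ stack the rows of $R_i$, and let $x\in\mathbb{R}^{12(n-1)}$ stack $t_2,\dots,t_n,r_2,\dots,r_n$. The primal problem is $f^\star=\min_{x,y}\|Ax-by\|^2$ subject to $x^{\top}E_{iuv}x=1$ if $u=v$, $x^{\top}E_{iuv}x=0$ if $u\neq v$ ($u,v=1,2,3$, $i=1,\dots,n-1$), and $y^2=1$, where $A,b$ encode the anchored pose-graph cost and $E_{iuv}$ satisfies $x^{\top}E_{iuv}x=(R_i^{(u)})^{\top}R_i^{(v)}$. For multipliers $\lambda=(\{\lambda_{iuv}\},\lambda_y)$, $H(\lambda)=A^{\top}A-\sum_{i=1}^{n-1}\sum_{u,v=1}^3\lambda_{iuv}E_{iuv}$ and $M(\lambda)=\begin{bmatrix}H(\lambda)&-A^{\top}b\\-b^{\top}A&b^{\top}b-\lambda_y\end{bmatrix}$. The dual problem is the SDP $d^\star=\max_\lambda\sum_{i,u}\lambda_{iuu}+\lambda_y$ subject to $M(\lambda)\succeq 0$; the duality gap is $f^\star-d^\star$. *)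

theory Defs
  imports Complex_Main "Jordan_Normal_Form.Matrix"
begin

text \<open>Anchored 3D pose graph optimisation (SE-Sync style QCQP).
  There are n poses; the first one is the anchor.  The unknown vector x has
  dimension 12(n-1): first t_2,...,t_n (3(n-1) entries), then r_2,...,r_n,
  where r_i stacks the rows of R_i (9 entries each).
  Indices are 0-based: rotation blocks i < n-1, column indices u v < 3.\<close>

definition pg_dim :: "nat \<Rightarrow> nat" where
  "pg_dim n = 12 * (n - 1)"

definition rot_idx :: "nat \<Rightarrow> nat \<Rightarrow> nat \<Rightarrow> nat \<Rightarrow> nat" where
  "rot_idx n i a c = 3 * (n - 1) + 9 * i + 3 * a + c"

text \<open>E_{iuv}: the symmetric matrix with x^T E_{iuv} x = (R_i^(u))^T R_i^(v),
  R_i^(u) being the u-th column of R_i.\<close>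
definition E_mat :: "nat \<Rightarrow> nat \<Rightarrow> nat \<Rightarrow> nat \<Rightarrow> real mat" where
  "E_mat n i u v = mat (pg_dim n) (pg_dim n)
     (\<lambda>(p, q). (\<Sum>a<3. (if p = rot_idx n i a u \<and> q = rot_idx n i a v then 1/2 else 0)
                     + (if p = rot_idx n i a v \<and> q = rot_idx n i a u then 1/2 else 0)))"

definition primal_feasible :: "nat \<Rightarrow> real vec \<Rightarrow> real \<Rightarrow> bool" where
  "primal_feasible n x y \<longleftrightarrow> x \<in> carrier_vec (pg_dim n) \<and>
     (\<forall>i < n - 1. \<forall>u < 3. \<forall>v < 3.
        x \<bullet> (E_mat n i u v *\<^sub>v x) = (if u = v then 1 else 0)) \<and>
     y\<^sup>2 = 1"

definition primal_cost :: "real mat \<Rightarrow> real vec \<Rightarrow> real vec \<Rightarrow> real \<Rightarrow> real" where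
  "primal_cost A b x y = (let w = A *\<^sub>v x - y \<cdot>\<^sub>v b in w \<bullet> w)"

definition primal_value :: "nat \<Rightarrow> real mat \<Rightarrow> real vec \<Rightarrow> real" where
  "primal_value n A b = Inf {primal_cost A b x y | x y. primal_feasible n x y}"

definition primal_optimal :: "nat \<Rightarrow> real mat \<Rightarrow> real vec \<Rightarrow> real vec \<Rightarrow> real \<Rightarrow> bool" where
  "primal_optimal n A b x y \<longleftrightarrow> primal_feasible n x y \<and>
     (\<forall>x' y'. primal_feasible n x' y' \<longrightarrow> primal_cost A b x y \<le> primal_cost A b x' y')"

definition H_mat :: "nat \<Rightarrow> real mat \<Rightarrow> (nat \<Rightarrow> nat \<Rightarrow> nat \<Rightarrow> real) \<Rightarrow> real mat" where
  "H_mat n A lam = mat (pg_dim n) (pg_dim n) (\<lambda>(p, q).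
     (transpose_mat A * A) $$ (p, q) -
     (\<Sum>i<n - 1. \<Sum>u<3. \<Sum>v<3. lam i u v * E_mat n i u v $$ (p, q)))"

definition M_mat :: "nat \<Rightarrow> real mat \<Rightarrow> real vec \<Rightarrow> (nat \<Rightarrow> nat \<Rightarrow> nat \<Rightarrow> real) \<Rightarrow> real \<Rightarrow> real mat" where
  "M_mat n A b lam ly = (let c = transpose_mat A *\<^sub>v b in
     four_block_mat (H_mat n A lam)
       (mat (pg_dim n) 1 (\<lambda>(p, _). - (c $ p)))
       (mat 1 (pg_dim n) (\<lambda>(_, q). - (c $ q)))
       (mat 1 1 (\<lambda>_. b \<bullet> b - ly)))"

definition psd :: "real mat \<Rightarrow> bool" where
  "psd M \<longleftrightarrow> M \<in> carrier_mat (dim_row M) (dim_row M) \<and> transpose_mat M = M \<and>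
     (\<forall>v \<in> carrier_vec (dim_row M). v \<bullet> (M *\<^sub>v v) \<ge> 0)"

definition dual_objective :: "nat \<Rightarrow> (nat \<Rightarrow> nat \<Rightarrow> nat \<Rightarrow> real) \<Rightarrow> real \<Rightarrow> real" where
  "dual_objective n lam ly = (\<Sum>i<n - 1. \<Sum>u<3. lam i u u) + ly"

definition dual_feasible :: "nat \<Rightarrow> real mat \<Rightarrow> real vec \<Rightarrow> (nat \<Rightarrow> nat \<Rightarrow> nat \<Rightarrow> real) \<Rightarrow> real \<Rightarrow> bool" where
  "dual_feasible n A b lam ly \<longleftrightarrow> psd (M_mat n A b lam ly)"

definition dual_value :: "nat \<Rightarrow> real mat \<Rightarrow> real vec \<Rightarrow> real" where
  "dual_value n A b = Sup {dual_objective n lam ly | lam ly. dual_feasible n A b lam ly}"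

definition dual_optimal :: "nat \<Rightarrow> real mat \<Rightarrow> real vec \<Rightarrow> (nat \<Rightarrow> nat \<Rightarrow> nat \<Rightarrow> real) \<Rightarrow> real \<Rightarrow> bool" where
  "dual_optimal n A b lam ly \<longleftrightarrow> dual_feasible n A b lam ly \<and>
     (\<forall>lam' ly'. dual_feasible n A b lam' ly' \<longrightarrow> dual_objective n lam' ly' \<le> dual_objective n lam ly)"

end

theory Submission
  imports Defs "HOL-Analysis.Function_Topology"
begin

text \<open>For a feasible pair \<open>(x, y)\<close> and any multipliers, writing \<open>z = (x, y)\<close>, the constraints give
  \<open>\<parallel>A x - b y\<parallel>\<^sup>2 = d(\<lambda>) + z\<^sup>T M(\<lambda>) z\<close>, where \<open>d\<close> is the dual objective. If \<open>M(\<lambda>\<^sup>\<star>) \<succeq> 0\<close> and the gap is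
  zero, a feasible \<open>x\<close> with \<open>y = 1\<close> is therefore optimal exactly when \<open>z\<^sup>T M(\<lambda>\<^sup>\<star>) z = 0\<close>, i.e. when
  \<open>M(\<lambda>\<^sup>\<star>) z = 0\<close>; the rows of this equation are the stated linear system.

  That a primal minimiser exists at all needs an argument of its own: the rotation entries range over a
  compact set, and the unconstrained translations can be minimised out by an orthogonal projection,
  which depends continuously on the rotations. The sign symmetry \<open>(x, y) \<mapsto> (-x, -y)\<close> lets one
  restrict to \<open>y = 1\<close>.\<close>

section \<open>Quadratic forms and positive semidefinite matrices\<close>

lemma scalar_prod_eq_sum:
  "y \<in> carrier_vec d \<Longrightarrow> x \<bullet> y = (\<Sum>p<d. x $ p * y $ p)"
  by (auto simp: scalar_prod_def atLeast0LessThan)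

lemma mult_mat_vec_index_eq_sum:
  assumes "G \<in> carrier_mat d e" "x \<in> carrier_vec e" "p < d"
  shows "(G *\<^sub>v x) $ p = (\<Sum>q<e. G $$ (p, q) * x $ q)"
  using assms by (auto simp: scalar_prod_def row_def atLeast0LessThan)

definition quad_sum :: "nat \<Rightarrow> (nat \<Rightarrow> nat \<Rightarrow> real) \<Rightarrow> real vec \<Rightarrow> real" where
  "quad_sum d G x = (\<Sum>p<d. \<Sum>q<d. G p q * x $ p * x $ q)"

lemma quadratic_form_eq_quad_sum:
  assumes "x \<in> carrier_vec d" "G \<in> carrier_mat d d"
  shows "x \<bullet> (G *\<^sub>v x) = quad_sum d (\<lambda>p q. G $$ (p, q)) x"
proof -
  have "x \<bullet> (G *\<^sub>v x) = (\<Sum>p<d. x $ p * (G *\<^sub>v x) $ p)"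
    using assms by (intro scalar_prod_eq_sum) auto
  also have "\<dots> = (\<Sum>p<d. x $ p * (\<Sum>q<d. G $$ (p, q) * x $ q))"
    using assms by (intro sum.cong refl) (simp del: index_mult_mat_vec add: mult_mat_vec_index_eq_sum)
  finally show ?thesis
    by (simp add: quad_sum_def sum_distrib_left mult_ac)
qed

lemma quad_sum_add: "quad_sum d (\<lambda>p q. F p q + G p q) x = quad_sum d F x + quad_sum d G x"
  by (simp add: quad_sum_def distrib_right sum.distrib)

lemma quad_sum_diff: "quad_sum d (\<lambda>p q. F p q - G p q) x = quad_sum d F x - quad_sum d G x"
  by (simp add: quad_sum_def left_diff_distrib sum_subtractf)

lemma quad_sum_sum: "quad_sum d (\<lambda>p q. \<Sum>k\<in>K. F k p q) x = (\<Sum>k\<in>K. quad_sum d (F k) x)"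
  unfolding quad_sum_def sum_distrib_right by (simp add: sum.swap[of _ K])

lemma quad_sum_scale: "quad_sum d (\<lambda>p q. c * F p q) x = c * quad_sum d F x"
  by (simp add: quad_sum_def sum_distrib_left mult.assoc)

lemma quad_sum_delta:
  assumes "i < d" "j < d"
  shows "quad_sum d (\<lambda>p q. if p = i \<and> q = j then c else 0) x = c * x $ i * x $ j"
proof -
  have "(if p = i \<and> q = j then c else 0) * x $ p * x $ q =
      (if q = j then if p = i then c * x $ i * x $ j else 0 else 0)" for p q
    by simp
  then show ?thesis
    using assms by (simp add: quad_sum_def sum.delta)
qed

lemma quad_sum_mat: "quad_sum d (\<lambda>p q. mat d d f $$ (p, q)) x = quad_sum d (\<lambda>p q. f (p, q)) x"
  by (auto simp: quad_sum_def intro!: sum.cong)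

lemma minus_vec_eq_0_iff:
  fixes u v :: "'a :: ab_group_add vec"
  shows "u \<in> carrier_vec d \<Longrightarrow> v \<in> carrier_vec d \<Longrightarrow> u - v = 0\<^sub>v d \<longleftrightarrow> u = v"
  by (auto simp: vec_eq_iff)

lemma scalar_prod_self_eq_0_iff:
  fixes v :: "real vec"
  shows "v \<in> carrier_vec d \<Longrightarrow> v \<bullet> v = 0 \<longleftrightarrow> v = 0\<^sub>v d"
  using conjugate_square_eq_0_vec[of v d] by simp

lemma linear_dominated_by_quadratic:
  fixes B C :: real
  assumes nonneg: "\<And>t. 0 \<le> 2 * t * B + t\<^sup>2 * C" and "0 \<le> C"
  shows "B = 0"
proof (rule ccontr)
  assume "B \<noteq> 0"
  define s where "s = C + 1"
  define t where "t = - B / s"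
  have "s > 0" using \<open>0 \<le> C\<close> by (simp add: s_def)
  then have ts: "t * s = - B" by (simp add: t_def)
  have "(2 * t * B + t\<^sup>2 * C) * s\<^sup>2 = 2 * B * (t * s) * s + (t * s)\<^sup>2 * C"
    by (simp add: algebra_simps power2_eq_square)
  also have "\<dots> = - B\<^sup>2 * (C + 2)"
    unfolding ts by (simp add: s_def algebra_simps power2_eq_square)
  also have "\<dots> < 0" using \<open>B \<noteq> 0\<close> \<open>0 \<le> C\<close> by simp
  finally show False
    using nonneg[of t] \<open>s > 0\<close> by (simp add: mult_less_0_iff)
qed

lemma psd_quadratic_form_eq_0_imp_kernel:
  fixes M :: "real mat"
  assumes "psd M" and M: "M \<in> carrier_mat d d" and z: "z \<in> carrier_vec d"
    and "z \<bullet> (M *\<^sub>v z) = 0"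
  shows "M *\<^sub>v z = 0\<^sub>v d"
proof -
  let ?w = "M *\<^sub>v z"
  have w: "?w \<in> carrier_vec d" using M z by auto
  have nonneg: "0 \<le> v \<bullet> (M *\<^sub>v v)" if "v \<in> carrier_vec d" for v
    using \<open>psd M\<close> M that by (auto simp: psd_def)
  have symm: "z \<bullet> (M *\<^sub>v ?w) = ?w \<bullet> ?w"
    using \<open>psd M\<close> M z w transpose_vec_mult_scalar[OF M z w] comm_scalar_prod[OF z, of "M *\<^sub>v ?w"]
    by (simp add: psd_def)
  have "0 \<le> 2 * t * (?w \<bullet> ?w) + t\<^sup>2 * (?w \<bullet> (M *\<^sub>v ?w))" for t :: real
  proof -
    have "(z + t \<cdot>\<^sub>v ?w) \<bullet> (M *\<^sub>v (z + t \<cdot>\<^sub>v ?w)) =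
        z \<bullet> ?w + t * (z \<bullet> (M *\<^sub>v ?w)) + t * (?w \<bullet> ?w) + t * t * (?w \<bullet> (M *\<^sub>v ?w))"
      using M z w
      by (simp add: mult_add_distrib_mat_vec mult_mat_vec add_scalar_prod_distrib[of _ d]
          scalar_prod_add_distrib[of _ d] algebra_simps)
    then show ?thesis
      using nonneg[of "z + t \<cdot>\<^sub>v ?w"] z w symm \<open>z \<bullet> (M *\<^sub>v z) = 0\<close>
      by (simp add: power2_eq_square)
  qed
  then have "?w \<bullet> ?w = 0"
    by (rule linear_dominated_by_quadratic) (rule nonneg[OF w])
  then show ?thesis using scalar_prod_self_eq_0_iff[OF w] by simp
qed

section \<open>Weak duality and the zero-gap optimality conditions\<close>

lemma E_mat_carrier[simp]: "E_mat n i u v \<in> carrier_mat (pg_dim n) (pg_dim n)"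
  by (simp add: E_mat_def)

lemma H_mat_carrier[simp]: "H_mat n A lam \<in> carrier_mat (pg_dim n) (pg_dim n)"
  by (simp add: H_mat_def)

lemma M_mat_carrier[simp]: "M_mat n A b lam ly \<in> carrier_mat (pg_dim n + 1) (pg_dim n + 1)"
  unfolding M_mat_def Let_def by (rule four_block_carrier_mat) auto

lemma rot_idx_less_pg_dim: "i < n - 1 \<Longrightarrow> a < 3 \<Longrightarrow> c < 3 \<Longrightarrow> rot_idx n i a c < pg_dim n"
  by (simp add: rot_idx_def pg_dim_def)

lemma quadratic_form_E_mat:
  assumes x: "x \<in> carrier_vec (pg_dim n)" and "i < n - 1" "u < 3" "v < 3"
  shows "x \<bullet> (E_mat n i u v *\<^sub>v x) = (\<Sum>a<3. x $ rot_idx n i a u * x $ rot_idx n i a v)"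
  unfolding quadratic_form_eq_quad_sum[OF x E_mat_carrier]
  unfolding E_mat_def quad_sum_mat prod.case quad_sum_sum quad_sum_add
  using assms by (simp add: quad_sum_delta rot_idx_less_pg_dim)

lemma quadratic_form_H_mat:
  fixes A :: "real mat"
  assumes A: "A \<in> carrier_mat m (pg_dim n)" and x: "x \<in> carrier_vec (pg_dim n)"
  shows "x \<bullet> (H_mat n A lam *\<^sub>v x) = (A *\<^sub>v x) \<bullet> (A *\<^sub>v x) -
     (\<Sum>i<n - 1. \<Sum>u<3. \<Sum>v<3. lam i u v * (x \<bullet> (E_mat n i u v *\<^sub>v x)))"
proof -
  have AtA: "transpose_mat A * A \<in> carrier_mat (pg_dim n) (pg_dim n)" using A by auto
  have "x \<bullet> ((transpose_mat A * A) *\<^sub>v x) = (A *\<^sub>v x) \<bullet> (A *\<^sub>v x)"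
    using A x transpose_vec_mult_scalar[of A m "pg_dim n" x "A *\<^sub>v x"]
      comm_scalar_prod[OF x, of "transpose_mat A *\<^sub>v (A *\<^sub>v x)"]
    by (simp add: assoc_mult_mat_vec[of _ _ m])
  moreover have "x \<bullet> (H_mat n A lam *\<^sub>v x) = x \<bullet> ((transpose_mat A * A) *\<^sub>v x) -
     (\<Sum>i<n - 1. \<Sum>u<3. \<Sum>v<3. lam i u v * (x \<bullet> (E_mat n i u v *\<^sub>v x)))"
    unfolding quadratic_form_eq_quad_sum[OF x AtA] quadratic_form_eq_quad_sum[OF x E_mat_carrier]
      quadratic_form_eq_quad_sum[OF x H_mat_carrier]
    unfolding H_mat_def quad_sum_mat prod.case quad_sum_diff quad_sum_sum quad_sum_scale ..
  ultimately show ?thesis by simp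
qed

lemma primal_cost_expand:
  fixes A :: "real mat"
  assumes A: "A \<in> carrier_mat m d" and x: "x \<in> carrier_vec d" and b: "b \<in> carrier_vec m"
  shows "primal_cost A b x y = (A *\<^sub>v x) \<bullet> (A *\<^sub>v x) - 2 * y * (b \<bullet> (A *\<^sub>v x)) + y\<^sup>2 * (b \<bullet> b)"
proof -
  have Ax: "A *\<^sub>v x \<in> carrier_vec m" using A x by auto
  then show ?thesis
    using b comm_scalar_prod[OF Ax b]
    by (simp add: primal_cost_def minus_scalar_prod_distrib[of _ m] scalar_prod_minus_distrib[of _ m]
        power2_eq_square algebra_simps)
qed

definition lift_vec :: "real vec \<Rightarrow> real \<Rightarrow> real vec" where
  "lift_vec x y = x @\<^sub>v vec 1 (\<lambda>_. y)"

lemma lift_vec_carrier: "x \<in> carrier_vec d \<Longrightarrow> lift_vec x y \<in> carrier_vec (d + 1)"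
  unfolding lift_vec_def by (rule append_carrier_vec) auto

lemma scalar_prod_lift_vec:
  "x \<in> carrier_vec d \<Longrightarrow> x' \<in> carrier_vec d \<Longrightarrow> lift_vec x y \<bullet> lift_vec x' y' = x \<bullet> x' + y * y'"
  unfolding lift_vec_def by (subst scalar_prod_append[of _ d _ 1]) (auto simp: scalar_prod_def)

lemma lift_vec_eq_0_iff:
  "x \<in> carrier_vec d \<Longrightarrow> lift_vec x y = 0\<^sub>v (d + 1) \<longleftrightarrow> x = 0\<^sub>v d \<and> y = 0"
proof -
  assume "x \<in> carrier_vec d"
  moreover have "0\<^sub>v (d + 1) = (0\<^sub>v d @\<^sub>v 0\<^sub>v 1 :: real vec)" by (auto simp: vec_eq_iff)
  moreover have "vec 1 (\<lambda>_. y) = 0\<^sub>v 1 \<longleftrightarrow> y = 0" by (auto simp: vec_eq_iff)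
  ultimately show ?thesis by (simp add: lift_vec_def)
qed

lemma M_mat_mult_lift_vec:
  fixes A :: "real mat" and b x :: "real vec" and y ly :: real
  assumes A: "A \<in> carrier_mat m (pg_dim n)" and b: "b \<in> carrier_vec m"
    and x: "x \<in> carrier_vec (pg_dim n)"
  defines "c \<equiv> transpose_mat A *\<^sub>v b"
  shows "M_mat n A b lam ly *\<^sub>v lift_vec x y =
    lift_vec (H_mat n A lam *\<^sub>v x - y \<cdot>\<^sub>v c) (y * (b \<bullet> b - ly) - c \<bullet> x)"
proof -
  let ?N = "pg_dim n" and ?y = "vec 1 (\<lambda>_. y)"
  have c: "c \<in> carrier_vec ?N" using A b by (simp add: c_def)
  have "M_mat n A b lam ly *\<^sub>v lift_vec x y =
      (H_mat n A lam *\<^sub>v x + mat ?N 1 (\<lambda>(p, _). - (c $ p)) *\<^sub>v ?y) @\<^sub>v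
      (mat 1 ?N (\<lambda>(_, q). - (c $ q)) *\<^sub>v x + mat 1 1 (\<lambda>_. b \<bullet> b - ly) *\<^sub>v ?y)"
    unfolding M_mat_def Let_def lift_vec_def c_def[symmetric]
    by (rule four_block_mat_mult_vec) (use x in auto)
  also have "H_mat n A lam *\<^sub>v x + mat ?N 1 (\<lambda>(p, _). - (c $ p)) *\<^sub>v ?y = H_mat n A lam *\<^sub>v x - y \<cdot>\<^sub>v c"
  proof (rule eq_vecI)
    fix p assume "p < dim_vec (H_mat n A lam *\<^sub>v x - y \<cdot>\<^sub>v c)"
    then have "p < ?N" using c by simp
    then show "(H_mat n A lam *\<^sub>v x + mat ?N 1 (\<lambda>(p, _). - (c $ p)) *\<^sub>v ?y) $ p = (H_mat n A lam *\<^sub>v x - y \<cdot>\<^sub>v c) $ p"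
      using c by (simp add: scalar_prod_def row_def)
  qed (use c in simp)
  also have "mat 1 ?N (\<lambda>(_, q). - (c $ q)) *\<^sub>v x + mat 1 1 (\<lambda>_. b \<bullet> b - ly) *\<^sub>v ?y =
      vec 1 (\<lambda>_. y * (b \<bullet> b - ly) - c \<bullet> x)"
  proof (rule eq_vecI)
    have "row (mat 1 ?N (\<lambda>(_, q). - (c $ q))) 0 \<bullet> x = - (c \<bullet> x)"
      using x c by (simp add: scalar_prod_def row_def sum_negf)
    then show "(mat 1 ?N (\<lambda>(_, q). - (c $ q)) *\<^sub>v x + mat 1 1 (\<lambda>_. b \<bullet> b - ly) *\<^sub>v ?y) $ i =
      vec 1 (\<lambda>_. y * (b \<bullet> b - ly) - c \<bullet> x) $ i" if "i < dim_vec (vec 1 (\<lambda>_. y * (b \<bullet> b - ly) - c \<bullet> x))" for i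
      using that by (simp add: scalar_prod_def)
  qed simp
  finally show ?thesis by (simp add: lift_vec_def)
qed

lemma quadratic_form_M_mat:
  fixes A :: "real mat" and b x :: "real vec"
  assumes A: "A \<in> carrier_mat m (pg_dim n)" and b: "b \<in> carrier_vec m"
    and x: "x \<in> carrier_vec (pg_dim n)"
  shows "lift_vec x y \<bullet> (M_mat n A b lam ly *\<^sub>v lift_vec x y) = primal_cost A b x y -
    (\<Sum>i<n - 1. \<Sum>u<3. \<Sum>v<3. lam i u v * (x \<bullet> (E_mat n i u v *\<^sub>v x))) - ly * y\<^sup>2"
proof -
  let ?c = "transpose_mat A *\<^sub>v b"
  have c: "?c \<in> carrier_vec (pg_dim n)" using A b by simp
  have Hx: "H_mat n A lam *\<^sub>v x \<in> carrier_vec (pg_dim n)"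
    by (rule mult_mat_vec_carrier[OF H_mat_carrier x])
  have cx: "?c \<bullet> x = b \<bullet> (A *\<^sub>v x)" by (rule transpose_vec_mult_scalar[OF A x b])
  have "lift_vec x y \<bullet> (M_mat n A b lam ly *\<^sub>v lift_vec x y) =
      x \<bullet> (H_mat n A lam *\<^sub>v x - y \<cdot>\<^sub>v ?c) + y * (y * (b \<bullet> b - ly) - ?c \<bullet> x)"
    using x c Hx by (simp add: M_mat_mult_lift_vec[OF A b x] scalar_prod_lift_vec[of _ "pg_dim n"])
  also have "x \<bullet> (H_mat n A lam *\<^sub>v x - y \<cdot>\<^sub>v ?c) = x \<bullet> (H_mat n A lam *\<^sub>v x) - y * (?c \<bullet> x)"
    using x c Hx comm_scalar_prod[OF x c]
    by (simp add: scalar_prod_minus_distrib[of _ "pg_dim n"])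
  finally show ?thesis
    by (simp add: quadratic_form_H_mat[OF A x] primal_cost_expand[OF A x b] cx power2_eq_square
        algebra_simps)
qed

lemma primal_cost_eq_dual_objective_plus_form:
  fixes A :: "real mat"
  assumes A: "A \<in> carrier_mat m (pg_dim n)" and b: "b \<in> carrier_vec m"
    and feas: "primal_feasible n x y"
  shows "primal_cost A b x y =
    dual_objective n lam ly + lift_vec x y \<bullet> (M_mat n A b lam ly *\<^sub>v lift_vec x y)"
proof -
  have x: "x \<in> carrier_vec (pg_dim n)" and "y\<^sup>2 = 1" using feas by (auto simp: primal_feasible_def)
  have "(\<Sum>i<n - 1. \<Sum>u<3. \<Sum>v<3. lam i u v * (x \<bullet> (E_mat n i u v *\<^sub>v x))) =
      (\<Sum>i<n - 1. \<Sum>u<3::nat. \<Sum>v<3::nat. lam i u v * (if u = v then 1 else 0))"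
    using feas by (intro sum.cong refl) (auto simp: primal_feasible_def)
  also have "\<dots> = (\<Sum>i<n - 1. \<Sum>u<3. lam i u u)"
    by (simp add: if_distrib[of "\<lambda>t. _ * t"] cong: if_cong)
  finally show ?thesis
    using \<open>y\<^sup>2 = 1\<close> by (simp add: quadratic_form_M_mat[OF A b x] dual_objective_def)
qed

lemma weak_duality:
  fixes A :: "real mat"
  assumes A: "A \<in> carrier_mat m (pg_dim n)" and b: "b \<in> carrier_vec m"
    and "dual_feasible n A b lam ly" and feas: "primal_feasible n x y"
  shows "dual_objective n lam ly \<le> primal_cost A b x y"
proof -
  have "x \<in> carrier_vec (pg_dim n)" using feas by (simp add: primal_feasible_def)
  then have "lift_vec x y \<in> carrier_vec (dim_row (M_mat n A b lam ly))"
    using carrier_matD(1)[OF M_mat_carrier] by (metis lift_vec_carrier)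
  then have "0 \<le> lift_vec x y \<bullet> (M_mat n A b lam ly *\<^sub>v lift_vec x y)"
    using \<open>dual_feasible n A b lam ly\<close> by (simp add: dual_feasible_def psd_def)
  then show ?thesis
    using primal_cost_eq_dual_objective_plus_form[OF A b feas, of lam ly] by simp
qed

lemma M_mat_mult_lift_vec_eq_0_iff:
  fixes A :: "real mat"
  assumes A: "A \<in> carrier_mat m (pg_dim n)" and b: "b \<in> carrier_vec m"
    and x: "x \<in> carrier_vec (pg_dim n)"
  shows "M_mat n A b lam ly *\<^sub>v lift_vec x 1 = 0\<^sub>v (pg_dim n + 1) \<longleftrightarrow>
    H_mat n A lam *\<^sub>v x = transpose_mat A *\<^sub>v b \<and> b \<bullet> (A *\<^sub>v x) = b \<bullet> b - ly"
proof -
  let ?c = "transpose_mat A *\<^sub>v b"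
  have c: "?c \<in> carrier_vec (pg_dim n)" using A b by simp
  have Hx: "H_mat n A lam *\<^sub>v x \<in> carrier_vec (pg_dim n)"
    by (rule mult_mat_vec_carrier[OF H_mat_carrier x])
  have "H_mat n A lam *\<^sub>v x - 1 \<cdot>\<^sub>v ?c = 0\<^sub>v (pg_dim n) \<longleftrightarrow> H_mat n A lam *\<^sub>v x = ?c"
    using minus_vec_eq_0_iff[OF Hx c] c by simp
  moreover have "?c \<bullet> x = b \<bullet> (A *\<^sub>v x)" by (rule transpose_vec_mult_scalar[OF A x b])
  moreover have w: "H_mat n A lam *\<^sub>v x - 1 \<cdot>\<^sub>v ?c \<in> carrier_vec (pg_dim n)" using Hx c by simp
  ultimately show ?thesis
    unfolding M_mat_mult_lift_vec[OF A b x] lift_vec_eq_0_iff[OF w] by auto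
qed

lemma tight_primal_optimal_iff:
  fixes A :: "real mat"
  assumes A: "A \<in> carrier_mat m (pg_dim n)" and b: "b \<in> carrier_vec m"
    and dual: "dual_feasible n A b lam ly"
    and opt0: "primal_optimal n A b x0 y0" and tight: "primal_cost A b x0 y0 = dual_objective n lam ly"
    and feas: "primal_feasible n x 1"
  shows "primal_optimal n A b x 1 \<longleftrightarrow>
    H_mat n A lam *\<^sub>v x = transpose_mat A *\<^sub>v b \<and> b \<bullet> (A *\<^sub>v x) = b \<bullet> b - ly"
proof -
  let ?M = "M_mat n A b lam ly" and ?z = "lift_vec x 1"
  have x: "x \<in> carrier_vec (pg_dim n)" using feas by (simp add: primal_feasible_def)
  have M: "?M \<in> carrier_mat (pg_dim n + 1) (pg_dim n + 1)" by (rule M_mat_carrier)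
  have z: "?z \<in> carrier_vec (pg_dim n + 1)" using x by (rule lift_vec_carrier)
  have "primal_optimal n A b x 1 \<longleftrightarrow> primal_cost A b x 1 = dual_objective n lam ly"
    using weak_duality[OF A b dual] opt0 tight feas unfolding primal_optimal_def
    by (metis order.trans order_antisym)
  also have "\<dots> \<longleftrightarrow> ?z \<bullet> (?M *\<^sub>v ?z) = 0"
    using primal_cost_eq_dual_objective_plus_form[OF A b feas, of lam ly] by simp
  also have "\<dots> \<longleftrightarrow> ?M *\<^sub>v ?z = 0\<^sub>v (pg_dim n + 1)"
    using psd_quadratic_form_eq_0_imp_kernel[OF _ M z] dual z
    by (auto simp: dual_feasible_def)
  finally show ?thesis using M_mat_mult_lift_vec_eq_0_iff[OF A b x] by simp
qed

section \<open>Least squares by orthogonal projection\<close>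

definition inner_upto :: "nat \<Rightarrow> (nat \<Rightarrow> real) \<Rightarrow> (nat \<Rightarrow> real) \<Rightarrow> real" where
  "inner_upto m u v = (\<Sum>j<m. u j * v j)"

definition lincomb :: "nat \<Rightarrow> (nat \<Rightarrow> real) \<Rightarrow> (nat \<Rightarrow> nat \<Rightarrow> real) \<Rightarrow> nat \<Rightarrow> real" where
  "lincomb k s cs j = (\<Sum>i<k. s i * cs i j)"

definition mat_apply :: "nat \<Rightarrow> (nat \<Rightarrow> nat \<Rightarrow> real) \<Rightarrow> (nat \<Rightarrow> real) \<Rightarrow> nat \<Rightarrow> real" where
  "mat_apply m Q c j = (\<Sum>l<m. Q j l * c l)"

text \<open>Vectors of \<open>\<real>\<^sup>m\<close> are represented by functions \<open>nat \<Rightarrow> real\<close> whose entries beyond \<open>m\<close> are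
  ignored. \<open>Q\<close> is the matrix of the orthogonal projection onto the span of \<open>cs 0, \<dots>, cs (k - 1)\<close>.\<close>

definition orth_projector :: "nat \<Rightarrow> nat \<Rightarrow> (nat \<Rightarrow> nat \<Rightarrow> real) \<Rightarrow> (nat \<Rightarrow> nat \<Rightarrow> real) \<Rightarrow> bool" where
  "orth_projector m k cs Q \<longleftrightarrow> (\<forall>c. (\<exists>s. \<forall>j<m. mat_apply m Q c j = lincomb k s cs j) \<and>
     (\<forall>i<k. inner_upto m (c - mat_apply m Q c) (cs i) = 0))"

lemma inner_upto_cong:
  "(\<And>j. j < m \<Longrightarrow> u j = u' j) \<Longrightarrow> (\<And>j. j < m \<Longrightarrow> v j = v' j) \<Longrightarrow> inner_upto m u v = inner_upto m u' v'"
  by (simp add: inner_upto_def)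

lemma inner_upto_commute: "inner_upto m u v = inner_upto m v u"
  by (simp add: inner_upto_def mult.commute)

lemma inner_upto_diff_left: "inner_upto m (u - w) v = inner_upto m u v - inner_upto m w v"
  by (simp add: inner_upto_def left_diff_distrib sum_subtractf)

lemma inner_upto_diff_right: "inner_upto m u (v - w) = inner_upto m u v - inner_upto m u w"
  by (simp add: inner_upto_def right_diff_distrib sum_subtractf)

lemma inner_upto_diff_self:
  "inner_upto m (u - v) (u - v) = inner_upto m u u - 2 * inner_upto m u v + inner_upto m v v"
  by (simp add: inner_upto_def algebra_simps sum.distrib sum_subtractf sum_distrib_left)

lemma inner_upto_scale_left: "inner_upto m (\<lambda>j. a * u j) v = a * inner_upto m u v"
  by (simp add: inner_upto_def sum_distrib_left mult.assoc)

lemma inner_upto_self_nonneg: "0 \<le> inner_upto m u u"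
  by (simp add: inner_upto_def sum_nonneg)

lemma inner_upto_lincomb: "inner_upto m u (lincomb k s cs) = (\<Sum>i<k. s i * inner_upto m u (cs i))"
  by (simp add: inner_upto_def lincomb_def sum_distrib_left sum.swap[of _ "{..<k}"] mult.left_commute)

lemma inner_upto_lincomb_eq_0:
  "(\<And>i. i < k \<Longrightarrow> inner_upto m u (cs i) = 0) \<Longrightarrow> inner_upto m u (lincomb k s cs) = 0"
  by (simp add: inner_upto_lincomb)

lemma lincomb_Suc: "lincomb (Suc k) s cs j = lincomb k s cs j + s k * cs k j"
  by (simp add: lincomb_def)

lemma lincomb_cong: "(\<And>i. i < k \<Longrightarrow> s i = s' i) \<Longrightarrow> lincomb k s cs = lincomb k s' cs"
  by (auto simp: lincomb_def intro!: ext sum.cong)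

lemma lincomb_diff: "lincomb k (s - t) cs j = lincomb k s cs j - lincomb k t cs j"
  by (simp add: lincomb_def left_diff_distrib sum_subtractf)

lemma mat_apply_rank_one_update:
  "mat_apply m (\<lambda>j l. Q j l + a j * a l / D) c j = mat_apply m Q c j + inner_upto m a c / D * a j"
  by (simp add: mat_apply_def inner_upto_def distrib_right sum.distrib sum_divide_distrib
      sum_distrib_left algebra_simps)

lemma orth_projector_range:
  "orth_projector m k cs Q \<Longrightarrow> \<exists>s. \<forall>j<m. mat_apply m Q c j = lincomb k s cs j"
  by (simp add: orth_projector_def)

lemma orth_projector_residual_orth:
  "orth_projector m k cs Q \<Longrightarrow> i < k \<Longrightarrow> inner_upto m (c - mat_apply m Q c) (cs i) = 0"
  by (simp add: orth_projector_def)

lemma orth_projector_residual_orth_range: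
  assumes "orth_projector m k cs Q"
  shows "inner_upto m (c - mat_apply m Q c) (mat_apply m Q e) = 0"
proof -
  obtain s where "\<forall>j<m. mat_apply m Q e j = lincomb k s cs j"
    using orth_projector_range[OF assms] by blast
  then have "inner_upto m (c - mat_apply m Q c) (mat_apply m Q e) =
      inner_upto m (c - mat_apply m Q c) (lincomb k s cs)"
    by (intro inner_upto_cong) auto
  also have "\<dots> = 0"
    by (intro inner_upto_lincomb_eq_0 orth_projector_residual_orth[OF assms])
  finally show ?thesis .
qed

lemma orth_projector_residual_inner:
  assumes "orth_projector m k cs Q"
  shows "inner_upto m (c - mat_apply m Q c) e = inner_upto m c (e - mat_apply m Q e)"
proof -
  have "inner_upto m (mat_apply m Q c) (e - mat_apply m Q e) = 0"
    using orth_projector_residual_orth_range[OF assms, of e c] by (simp add: inner_upto_commute)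
  then show ?thesis
    using orth_projector_residual_orth_range[OF assms, of c e]
    by (simp add: inner_upto_diff_left inner_upto_diff_right)
qed

lemma orth_projector_0: "orth_projector m 0 cs (\<lambda>_ _. 0)"
  by (simp add: orth_projector_def mat_apply_def lincomb_def)

lemma orth_projector_Suc_dependent:
  assumes P: "orth_projector m k cs Q" and dep: "\<And>j. j < m \<Longrightarrow> cs k j = mat_apply m Q (cs k) j"
  shows "orth_projector m (Suc k) cs Q"
  unfolding orth_projector_def
proof (rule allI, rule conjI)
  fix c
  obtain s where "\<forall>j<m. mat_apply m Q c j = lincomb k s cs j"
    using orth_projector_range[OF P] by blast
  then show "\<exists>s. \<forall>j<m. mat_apply m Q c j = lincomb (Suc k) s cs j"
    by (intro exI[of _ "s(k := 0)"]) (simp add: lincomb_Suc lincomb_cong[of k "s(k := 0)" s])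
  have "inner_upto m (c - mat_apply m Q c) (cs k) = inner_upto m (c - mat_apply m Q c) (mat_apply m Q (cs k))"
    using dep by (intro inner_upto_cong) auto
  then show "\<forall>i<Suc k. inner_upto m (c - mat_apply m Q c) (cs i) = 0"
    using orth_projector_residual_orth[OF P] orth_projector_residual_orth_range[OF P]
    by (auto simp: less_Suc_eq)
qed

text \<open>A Gram--Schmidt step: add the rank-one projector onto the residual of the new column.\<close>

lemma orth_projector_Suc_update:
  assumes P: "orth_projector m k cs Q"
    and a: "a = cs k - mat_apply m Q (cs k)" and D: "inner_upto m a a \<noteq> 0"
  shows "orth_projector m (Suc k) cs (\<lambda>j l. Q j l + a j * a l / inner_upto m a a)"
  unfolding orth_projector_def
proof (rule allI, rule conjI)
  fix c
  let ?Q' = "\<lambda>j l. Q j l + a j * a l / inner_upto m a a"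
  define \<alpha> where "\<alpha> = inner_upto m a c / inner_upto m a a"
  have Q': "mat_apply m ?Q' c j = mat_apply m Q c j + \<alpha> * a j" for j
    unfolding \<alpha>_def by (rule mat_apply_rank_one_update)
  obtain s where s: "\<forall>j<m. mat_apply m Q c j = lincomb k s cs j"
    using orth_projector_range[OF P] by blast
  obtain sa where sa: "\<forall>j<m. mat_apply m Q (cs k) j = lincomb k sa cs j"
    using orth_projector_range[OF P] by blast
  let ?s' = "(\<lambda>i. s i - \<alpha> * sa i)(k := \<alpha>)"
  have "mat_apply m ?Q' c j = lincomb (Suc k) ?s' cs j" if "j < m" for j
  proof -
    have "lincomb (Suc k) ?s' cs j = lincomb k (\<lambda>i. s i - \<alpha> * sa i) cs j + \<alpha> * cs k j"
      using lincomb_cong[of k ?s' "\<lambda>i. s i - \<alpha> * sa i" cs] by (simp add: lincomb_Suc)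
    also have "\<dots> = lincomb k s cs j - \<alpha> * lincomb k sa cs j + \<alpha> * cs k j"
      by (simp add: lincomb_def left_diff_distrib sum_subtractf sum_distrib_left mult.assoc)
    moreover have "a j = cs k j - mat_apply m Q (cs k) j" using a by simp
    ultimately show ?thesis
      unfolding Q' using s sa that by (simp add: right_diff_distrib)
  qed
  then show "\<exists>s'. \<forall>j<m. mat_apply m ?Q' c j = lincomb (Suc k) s' cs j" by blast
  have res: "inner_upto m (c - mat_apply m ?Q' c) (cs i) =
      inner_upto m (c - mat_apply m Q c) (cs i) - \<alpha> * inner_upto m a (cs i)" for i
  proof -
    have "c - mat_apply m ?Q' c = (c - mat_apply m Q c) - (\<lambda>j. \<alpha> * a j)"
      by (simp add: Q' fun_eq_iff)
    then show ?thesis by (simp add: inner_upto_diff_left inner_upto_scale_left)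
  qed
  have "inner_upto m a (mat_apply m Q c) = 0"
    using orth_projector_residual_orth_range[OF P, of "cs k" c] by (simp add: a)
  then have "inner_upto m (c - mat_apply m Q c) (cs k) = inner_upto m a c"
    using orth_projector_residual_inner[OF P, of c "cs k"]
    by (simp add: a[symmetric] inner_upto_diff_left inner_upto_commute)
  moreover have "inner_upto m a (cs k) = inner_upto m a a"
    using orth_projector_residual_orth_range[OF P, of "cs k" "cs k"] by (simp add: a inner_upto_diff_right)
  moreover have "inner_upto m a (cs i) = 0" if "i < k" for i
    using orth_projector_residual_orth[OF P that] by (simp add: a)
  ultimately show "\<forall>i<Suc k. inner_upto m (c - mat_apply m ?Q' c) (cs i) = 0"
    using orth_projector_residual_orth[OF P] D by (auto simp: res less_Suc_eq \<alpha>_def)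
qed

lemma orth_projector_exists: "\<exists>Q. orth_projector m k cs Q"
proof (induction k)
  case 0
  show ?case using orth_projector_0 by blast
next
  case (Suc k)
  then obtain Q where P: "orth_projector m k cs Q" by blast
  define a where "a = cs k - mat_apply m Q (cs k)"
  show ?case
  proof (cases "inner_upto m a a = 0")
    case True
    then have "a j = 0" if "j < m" for j
      using that sum_nonneg_eq_0_iff[of "{..<m}" "\<lambda>j. a j * a j"] by (simp add: inner_upto_def)
    then have "cs k j = mat_apply m Q (cs k) j" if "j < m" for j
      using that by (simp add: a_def)
    then show ?thesis using orth_projector_Suc_dependent[OF P] by blast
  next
    case False
    then show ?thesis using orth_projector_Suc_update[OF P a_def] by blast
  qed
qed

lemma orth_projector_least_squares:
  assumes P: "orth_projector m k cs Q"
  shows "inner_upto m (c - mat_apply m Q c) (c - mat_apply m Q c) \<le>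
    inner_upto m (lincomb k t cs - c) (lincomb k t cs - c)"
proof -
  obtain s where s: "\<forall>j<m. mat_apply m Q c j = lincomb k s cs j"
    using orth_projector_range[OF P] by blast
  let ?w = "c - mat_apply m Q c" and ?L = "lincomb k (t - s) cs"
  have "inner_upto m ?L ?w = 0"
    using inner_upto_lincomb_eq_0[of k m ?w cs "t - s"] orth_projector_residual_orth[OF P]
    by (simp add: inner_upto_commute)
  moreover have "inner_upto m (lincomb k t cs - c) (lincomb k t cs - c) = inner_upto m (?L - ?w) (?L - ?w)"
    using s by (intro inner_upto_cong) (simp_all add: lincomb_diff)
  ultimately have "inner_upto m (lincomb k t cs - c) (lincomb k t cs - c) = inner_upto m ?L ?L + inner_upto m ?w ?w"
    by (simp add: inner_upto_diff_self)
  then show ?thesis using inner_upto_self_nonneg[of m ?L] by simp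
qed

lemma orth_projector_least_squares_attained:
  assumes "\<forall>j<m. mat_apply m Q c j = lincomb k s cs j"
  shows "inner_upto m (lincomb k s cs - c) (lincomb k s cs - c) =
    inner_upto m (c - mat_apply m Q c) (c - mat_apply m Q c)"
  using assms by (auto simp: inner_upto_def algebra_simps intro!: sum.cong)

section \<open>Existence of a primal minimiser\<close>

lemma rot_idx_ge: "3 * (n - 1) \<le> rot_idx n i a c"
  by (simp add: rot_idx_def)

lemma rot_offset_decode:
  fixes i a u :: nat
  assumes "a < 3" "u < 3"
  shows "(9 * i + 3 * a + u) mod 3 = u" "(9 * i + 3 * a + u) div 3 mod 3 = a" "(9 * i + 3 * a + u) div 9 = i"
proof -
  have e3: "9 * i + 3 * a + u = u + (a + i * 3) * 3" by simp
  have "(9 * i + 3 * a + u) mod 3 = u mod 3" unfolding e3 by (rule mod_mult_self1)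
  then show "(9 * i + 3 * a + u) mod 3 = u" using assms by simp
  have "(9 * i + 3 * a + u) div 3 = a + i * 3 + u div 3" unfolding e3 by (rule div_mult_self1) simp
  then show "(9 * i + 3 * a + u) div 3 mod 3 = a" using assms by simp
  have e9: "9 * i + 3 * a + u = (3 * a + u) + i * 9" by simp
  have "(9 * i + 3 * a + u) div 9 = i + (3 * a + u) div 9" unfolding e9 by (rule div_mult_self1) simp
  then show "(9 * i + 3 * a + u) div 9 = i" using assms by simp
qed

lemma rot_idx_inj:
  assumes "rot_idx n i a u = rot_idx n i' a' u'" "a < 3" "u < 3" "a' < 3" "u' < 3"
  shows "i = i' \<and> a = a' \<and> u = u'"
proof -
  have "9 * i + 3 * a + u = 9 * i' + 3 * a' + u'" using assms(1) by (simp add: rot_idx_def)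
  then show ?thesis using rot_offset_decode[of a u i] rot_offset_decode[of a' u' i'] assms(2-) by metis
qed

lemma rot_idx_surj:
  assumes "3 * (n - 1) \<le> p" "p < pg_dim n"
  shows "\<exists>i<n - 1. \<exists>a<3. \<exists>u<3. p = rot_idx n i a u"
proof -
  define q where "q = p - 3 * (n - 1)"
  have "q div 9 * 9 + q mod 9 = q" "q mod 9 div 3 * 3 + q mod 9 mod 3 = q mod 9"
    by (rule div_mult_mod_eq)+
  moreover have "q mod 9 mod 3 = q mod 3" by (simp add: mod_mod_cancel)
  ultimately have q: "q = 9 * (q div 9) + 3 * (q mod 9 div 3) + q mod 3" by linarith
  have "q div 9 < n - 1" using assms by (simp add: q_def pg_dim_def less_mult_imp_div_less)
  moreover have "p = rot_idx n (q div 9) (q mod 9 div 3) (q mod 3)"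
    using assms q unfolding rot_idx_def q_def by linarith
  moreover have "q mod 9 div 3 < 3" "q mod 3 < 3" by simp_all
  ultimately show ?thesis by blast
qed

text \<open>The rotation entries of a vector, extended by zero. In the product topology on \<open>nat \<Rightarrow> real\<close>
  the box constraint makes the set of feasible rotation parts compact.\<close>

definition rotation_part :: "nat \<Rightarrow> real vec \<Rightarrow> nat \<Rightarrow> real" where
  "rotation_part n x p = (if 3 * (n - 1) \<le> p \<and> p < pg_dim n then x $ p else 0)"

definition orthonormal_rotations :: "nat \<Rightarrow> (nat \<Rightarrow> real) \<Rightarrow> bool" where
  "orthonormal_rotations n r \<longleftrightarrow> (\<forall>i<n - 1. \<forall>u<3. \<forall>v<3.
     (\<Sum>a<3. r (rot_idx n i a u) * r (rot_idx n i a v)) = (if u = v then 1 else 0))"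

definition rotation_box :: "nat \<Rightarrow> nat \<Rightarrow> real set" where
  "rotation_box n p = (if 3 * (n - 1) \<le> p \<and> p < pg_dim n then {-1..1} else {0})"

definition rotation_set :: "nat \<Rightarrow> (nat \<Rightarrow> real) set" where
  "rotation_set n = PiE UNIV (rotation_box n) \<inter> Collect (orthonormal_rotations n)"

lemma rotation_part_rot_idx:
  "i < n - 1 \<Longrightarrow> a < 3 \<Longrightarrow> c < 3 \<Longrightarrow> rotation_part n x (rot_idx n i a c) = x $ rot_idx n i a c"
  using rot_idx_ge[of n i a c] rot_idx_less_pg_dim[of i n a c] by (simp add: rotation_part_def)

lemma primal_feasible_iff:
  "primal_feasible n x y \<longleftrightarrow>
    x \<in> carrier_vec (pg_dim n) \<and> orthonormal_rotations n (rotation_part n x) \<and> y\<^sup>2 = 1"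
proof -
  have "x \<bullet> (E_mat n i u v *\<^sub>v x) =
      (\<Sum>a<3. rotation_part n x (rot_idx n i a u) * rotation_part n x (rot_idx n i a v))"
    if "x \<in> carrier_vec (pg_dim n)" "i < n - 1" "u < 3" "v < 3" for i u v
    unfolding quadratic_form_E_mat[OF that]
    by (intro sum.cong refl)
      (simp add: rotation_part_rot_idx[OF that(2) _ that(3)] rotation_part_rot_idx[OF that(2) _ that(4)])
  then show ?thesis
    by (auto simp: primal_feasible_def orthonormal_rotations_def)
qed

lemma orthonormal_rotations_abs_le_1:
  assumes r: "orthonormal_rotations n r" and "i < n - 1" "a < 3" "u < 3"
  shows "\<bar>r (rot_idx n i a u)\<bar> \<le> 1"
proof -
  have "(r (rot_idx n i a u))\<^sup>2 \<le> (\<Sum>a'<3. r (rot_idx n i a' u) * r (rot_idx n i a' u))"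
    unfolding power2_eq_square using \<open>a < 3\<close>
    by (intro member_le_sum[where f = "\<lambda>a'. r (rot_idx n i a' u) * r (rot_idx n i a' u)"]) auto
  also have "\<dots> = 1" using r assms by (simp add: orthonormal_rotations_def)
  finally show ?thesis by (simp add: abs_square_le_1)
qed

lemma rotation_part_mem_rotation_set:
  assumes "orthonormal_rotations n (rotation_part n x)"
  shows "rotation_part n x \<in> rotation_set n"
proof -
  have "rotation_part n x p \<in> rotation_box n p" for p
  proof (cases "3 * (n - 1) \<le> p \<and> p < pg_dim n")
    case True
    then obtain i a u where "i < n - 1" "a < 3" "u < 3" "p = rot_idx n i a u"
      using rot_idx_surj by blast
    then show ?thesis
      using orthonormal_rotations_abs_le_1[OF assms] True by (simp add: rotation_box_def abs_le_iff)
  qed (auto simp: rotation_part_def rotation_box_def)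
  then show ?thesis using assms by (simp add: rotation_set_def PiE_iff)
qed

lemma rotation_set_nonempty: "rotation_set n \<noteq> {}"
proof -
  define r where "r p = (if \<exists>i<n - 1. \<exists>a<3. p = rot_idx n i a a then 1 else 0 :: real)" for p
  have r_rot: "r (rot_idx n i a u) = (if a = u then 1 else 0)" if "i < n - 1" "a < 3" "u < 3" for i a u
    using that rot_idx_inj[of n i a u] by (auto simp: r_def)
  have "orthonormal_rotations n r"
    by (simp add: orthonormal_rotations_def r_rot if_distrib[of "\<lambda>t. t * _"] sum.delta cong: if_cong)
  moreover have "r p \<in> rotation_box n p" for p
    using rot_idx_ge rot_idx_less_pg_dim by (auto simp: r_def rotation_box_def)
  ultimately show ?thesis by (auto simp: rotation_set_def PiE_iff)
qed

lemma continuous_on_coordinate [continuous_intros]: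
  "continuous_on S (\<lambda>x :: 'a \<Rightarrow> 'b :: topological_space. x i)"
  by (rule continuous_on_subset[OF continuous_on_product_coordinates]) simp

lemma compact_rotation_set: "compact (rotation_set n)"
proof -
  have "compactin (product_topology (\<lambda>_. euclidean) UNIV) (PiE UNIV (rotation_box n))"
    by (subst compactin_PiE) (auto simp: rotation_box_def)
  then have "compact (PiE UNIV (rotation_box n))"
    by (simp add: euclidean_product_topology compactin_euclidean_iff)
  moreover have "Collect (orthonormal_rotations n) = (\<Inter>i<n - 1. \<Inter>u<3. \<Inter>v<3.
      {r. (\<Sum>a<3. r (rot_idx n i a u) * r (rot_idx n i a v)) = (if u = v then 1 else 0)})"
    by (auto simp: orthonormal_rotations_def)
  then have "closed (Collect (orthonormal_rotations n))"
    by (simp only:) (intro closed_INT ballI closed_Collect_eq continuous_intros)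
  ultimately show ?thesis unfolding rotation_set_def by (rule compact_Int_closed)
qed

definition rotation_rhs :: "real mat \<Rightarrow> real vec \<Rightarrow> nat \<Rightarrow> (nat \<Rightarrow> real) \<Rightarrow> nat \<Rightarrow> real" where
  "rotation_rhs A b n r j = b $ j - (\<Sum>p\<in>{3 * (n - 1)..<pg_dim n}. A $$ (j, p) * r p)"

lemma primal_cost_split:
  fixes A :: "real mat"
  assumes A: "A \<in> carrier_mat m (pg_dim n)" and b: "b \<in> carrier_vec m"
    and x: "x \<in> carrier_vec (pg_dim n)"
  defines "L \<equiv> lincomb (3 * (n - 1)) (\<lambda>p. x $ p) (\<lambda>i j. A $$ (j, i))"
  shows "primal_cost A b x 1 = inner_upto m (L - rotation_rhs A b n (rotation_part n x))
    (L - rotation_rhs A b n (rotation_part n x))"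
proof -
  let ?T = "3 * (n - 1)" and ?w = "A *\<^sub>v x - 1 \<cdot>\<^sub>v b"
  have w: "?w \<in> carrier_vec m" using A x b by simp
  have "?w $ j = (L - rotation_rhs A b n (rotation_part n x)) j" if "j < m" for j
  proof -
    have "(A *\<^sub>v x) $ j = (\<Sum>p<pg_dim n. A $$ (j, p) * x $ p)"
      by (rule mult_mat_vec_index_eq_sum[OF A x that])
    also have "\<dots> = (\<Sum>p<?T. A $$ (j, p) * x $ p) + (\<Sum>p\<in>{?T..<pg_dim n}. A $$ (j, p) * x $ p)"
      by (simp add: lessThan_atLeast0 sum.atLeastLessThan_concat pg_dim_def)
    also have "(\<Sum>p\<in>{?T..<pg_dim n}. A $$ (j, p) * x $ p) =
        (\<Sum>p\<in>{?T..<pg_dim n}. A $$ (j, p) * rotation_part n x p)"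
      by (intro sum.cong refl) (simp add: rotation_part_def)
    finally show ?thesis
      using b that by (simp add: L_def lincomb_def rotation_rhs_def mult.commute)
  qed
  then show ?thesis
    unfolding primal_cost_def Let_def scalar_prod_eq_sum[OF w] inner_upto_def
    by (intro sum.cong refl) simp
qed

lemma primal_feasible_uminus:
  assumes "primal_feasible n x y"
  shows "primal_feasible n (- x) (- y)"
proof -
  have x: "x \<in> carrier_vec (pg_dim n)" using assms by (simp add: primal_feasible_iff)
  then have "rotation_part n (- x) = (\<lambda>p. - rotation_part n x p)"
    by (auto simp: rotation_part_def)
  then show ?thesis
    using assms x by (simp add: primal_feasible_iff orthonormal_rotations_def)
qed

lemma primal_cost_uminus:
  fixes A :: "real mat"
  assumes A: "A \<in> carrier_mat m d" and b: "b \<in> carrier_vec m" and x: "x \<in> carrier_vec d"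
  shows "primal_cost A b (- x) (- y) = primal_cost A b x y"
proof -
  have "A *\<^sub>v (- x) = - (A *\<^sub>v x)" using A x by (intro eq_vecI) auto
  moreover have "A *\<^sub>v x \<in> carrier_vec m" using A x by simp
  ultimately show ?thesis
    using A b x by (simp add: primal_cost_expand[of A m d] carrier_vecD)
qed

lemma primal_optimal_if_minimal_at_1:
  fixes A :: "real mat"
  assumes A: "A \<in> carrier_mat m (pg_dim n)" and b: "b \<in> carrier_vec m"
    and feas: "primal_feasible n x 1"
    and min: "\<And>x'. primal_feasible n x' 1 \<Longrightarrow> primal_cost A b x 1 \<le> primal_cost A b x' 1"
  shows "primal_optimal n A b x 1"
  unfolding primal_optimal_def
proof (intro conjI allI impI feas)
  fix x' y' assume feas': "primal_feasible n x' y'"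
  then have x': "x' \<in> carrier_vec (pg_dim n)" by (simp add: primal_feasible_def)
  from feas' have "y' = 1 \<or> y' = -1" by (simp add: primal_feasible_def power2_eq_1_iff)
  then show "primal_cost A b x 1 \<le> primal_cost A b x' y'"
  proof
    assume "y' = -1"
    then have "primal_feasible n (- x') 1" using primal_feasible_uminus[OF feas'] by simp
    then show ?thesis
      using min \<open>y' = -1\<close> primal_cost_uminus[OF A b x', of "-1"] by fastforce
  qed (use min feas' in simp)
qed

lemma primal_optimal_exists:
  fixes A :: "real mat"
  assumes A: "A \<in> carrier_mat m (pg_dim n)" and b: "b \<in> carrier_vec m"
  shows "\<exists>x. primal_optimal n A b x 1"
proof -
  let ?T = "3 * (n - 1)" and ?cs = "\<lambda>i j. A $$ (j, i)" and ?rhs = "rotation_rhs A b n"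
  obtain Q where Q: "orth_projector m ?T ?cs Q" using orth_projector_exists by blast
  \<comment> \<open>Translations enter the cost linearly: minimising them out leaves the squared distance
    of a rotation-dependent right-hand side from the column span of the translation block.\<close>
  define h where "h r = inner_upto m (?rhs r - mat_apply m Q (?rhs r)) (?rhs r - mat_apply m Q (?rhs r))" for r
  have "continuous_on (rotation_set n) h"
    unfolding h_def inner_upto_def mat_apply_def rotation_rhs_def minus_apply by (intro continuous_intros)
  then obtain rs where rs: "rs \<in> rotation_set n" and rs_min: "\<And>r. r \<in> rotation_set n \<Longrightarrow> h rs \<le> h r"
    using continuous_attains_inf[OF compact_rotation_set rotation_set_nonempty] by blast
  obtain s where s: "\<forall>j<m. mat_apply m Q (?rhs rs) j = lincomb ?T s ?cs j"
    using orth_projector_range[OF Q] by blast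
  define xs where "xs = vec (pg_dim n) (\<lambda>p. if p < ?T then s p else rs p)"
  have xs: "xs \<in> carrier_vec (pg_dim n)" by (simp add: xs_def)
  have rot_xs: "rotation_part n xs = rs"
  proof
    fix p
    have "rs p \<in> rotation_box n p" using rs by (simp add: rotation_set_def PiE_iff)
    then show "rotation_part n xs p = rs p" by (auto simp: rotation_part_def rotation_box_def xs_def)
  qed
  then have feas: "primal_feasible n xs 1" using xs rs by (simp add: primal_feasible_iff rotation_set_def)
  have "lincomb ?T (\<lambda>p. xs $ p) ?cs = lincomb ?T s ?cs"
    by (rule lincomb_cong) (simp add: xs_def pg_dim_def)
  then have cost_xs: "primal_cost A b xs 1 = h rs"
    using primal_cost_split[OF A b xs] orth_projector_least_squares_attained[OF s] rot_xs
    by (simp add: h_def)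
  have "h rs \<le> primal_cost A b x 1" if "primal_feasible n x 1" for x
  proof -
    have x: "x \<in> carrier_vec (pg_dim n)" and "rotation_part n x \<in> rotation_set n"
      using that rotation_part_mem_rotation_set by (auto simp: primal_feasible_iff)
    then have "h rs \<le> h (rotation_part n x)" by (intro rs_min)
    also have "\<dots> \<le> primal_cost A b x 1"
      unfolding primal_cost_split[OF A b x] h_def by (rule orth_projector_least_squares[OF Q])
    finally show ?thesis .
  qed
  then show ?thesis
    using primal_optimal_if_minimal_at_1[OF A b feas] cost_xs by auto
qed

theorem proposition4:
  fixes n m :: nat and A :: "real mat" and b :: "real vec"
    and lam :: "nat \<Rightarrow> nat \<Rightarrow> nat \<Rightarrow> real" and ly :: real
  assumes "n \<ge> 1"
    and "A \<in> carrier_mat m (pg_dim n)" and "b \<in> carrier_vec m"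
    and gap: "primal_value n A b - dual_value n A b = 0"
    and opt: "dual_optimal n A b lam ly"
  shows "(\<exists>x. primal_optimal n A b x 1) \<and>
         (\<forall>x \<in> carrier_vec (pg_dim n).
            primal_optimal n A b x 1 \<longleftrightarrow>
              primal_feasible n x 1 \<and>
              H_mat n A lam *\<^sub>v x = transpose_mat A *\<^sub>v b \<and>
              b \<bullet> (A *\<^sub>v x) = b \<bullet> b - ly)"
proof -
  note A = assms(2) and b = assms(3)
  have dual: "dual_feasible n A b lam ly" using opt by (simp add: dual_optimal_def)
  obtain x0 where x0: "primal_optimal n A b x0 1" using primal_optimal_exists[OF A b] by blast
  have "primal_value n A b = primal_cost A b x0 1"
    unfolding primal_value_def using x0 unfolding primal_optimal_def by (intro cInf_eq_minimum) auto
  moreover have "dual_value n A b = dual_objective n lam ly"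
    unfolding dual_value_def using opt unfolding dual_optimal_def by (intro cSup_eq_maximum) auto
  ultimately have tight: "primal_cost A b x0 1 = dual_objective n lam ly" using gap by simp
  show ?thesis
    using x0 tight_primal_optimal_iff[OF A b dual x0 tight] by (auto simp: primal_optimal_def)
qed

end
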